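(* Let $N$ be a positive integer, $0<s<1$ with $N>2s$, $\alpha>-2s$, $\overline{C}>0$ and $\lambda>0$. Let $v\in\mathcal{L}_{2s}\cap C^{1,1}_{loc}$ satisfy $v(x)=-v_\lambda(x)$ for $x\in B_\lambda\setminus\{0\}$, and suppose that for a set $\Omega\subseteq B_\lambda\setminus\{0\}$, $$(-\Delta)^s v-\overline{C}|x|^\alpha v\ge 0\ \text{in }\Omega,\qquad v\ge 0\ \text{in }(B_\lambda\setminus\{0\})\setminus\Omega.$$ Then there exists a small $\delta_0>0$ such that $\inf_\Omega v\ge 0$ as long as $\Omega\subseteq\{x\in\mathbb{R}^N:\lambda-\delta_0<|x|<\lambda\}$.
   Context: $(-\Delta)^s u(x)=a_{N,s}\,\mathrm{P.V.}\int_{\mathbb{R}^N}\frac{u(x)-u(y)}{|x-y|^{N+2s}}dy$. $\mathcal{L}_{2s}=\{u : \int_{\mathbb{R}^N}\frac{|u(x)|}{1+|x|^{N+2s}}dx<\infty\}$. $B_\lambda$ is the open ball of radius $\lambda$ centered at $0$. The Kelvin transform is $v_\lambda(x)=\left(\frac{\lambda}{|x|}\right)^{N-2s}v\!\left(\frac{\lambda^2x}{|x|^2}\right)$ for $x\ne0$. *)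

theory Defs
  imports "HOL-Analysis.Analysis" "HOL-Analysis.Gamma_Function"
begin

definition frac_const :: "nat \<Rightarrow> real \<Rightarrow> real" where
  "frac_const N s = 2 powr (2 * s) * s * Gamma (real N / 2 + s)
      / (pi powr (real N / 2) * Gamma (1 - s))"

text \<open>Fractional Laplacian as a principal value integral over R^N = 'a,
  N = DIM('a).\<close>
definition frac_lap :: "real \<Rightarrow> ('a::euclidean_space \<Rightarrow> real) \<Rightarrow> 'a \<Rightarrow> real" where
  "frac_lap s u x = frac_const DIM('a) s *
     Lim (at_right 0) (\<lambda>\<epsilon>. LINT y : {y. dist x y \<ge> \<epsilon>} | lborel.
        (u x - u y) / norm (x - y) powr (real DIM('a) + 2 * s))"

definition L2s :: "real \<Rightarrow> ('a::euclidean_space \<Rightarrow> real) set" where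
  "L2s s = {u. integrable lborel (\<lambda>x. u x / (1 + norm x powr (real DIM('a) + 2 * s)))}"

definition C11_loc :: "('a::euclidean_space \<Rightarrow> real) set" where
  "C11_loc = {u. \<exists>D. (\<forall>x. (u has_derivative (\<lambda>h. D x \<bullet> h)) (at x)) \<and>
      (\<forall>K. compact K \<longrightarrow> (\<exists>L. \<forall>x\<in>K. \<forall>y\<in>K. norm (D x - D y) \<le> L * dist x y))}"

definition kelvin :: "real \<Rightarrow> real \<Rightarrow> ('a::euclidean_space \<Rightarrow> real) \<Rightarrow> 'a \<Rightarrow> real" where
  "kelvin s lam v x = (lam / norm x) powr (real DIM('a) - 2 * s) * v ((lam^2 / (norm x)^2) *\<^sub>R x)"

end

theory Submission
  imports Defs
begin

text \<open>Suppose \<open>v\<close> is negative somewhere in \<open>\<Omega>\<close> and let \<open>x0\<close> minimise \<open>v\<close> over the closed ball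
  of radius \<open>\<lambda>\<close>. Since \<open>v\<close> vanishes on the sphere and is nonnegative off \<open>\<Omega>\<close>, the point \<open>x0\<close>
  lies in \<open>\<Omega>\<close>, so \<open>\<rho> = \<lambda> - |x0| < \<delta>0\<close>. In the integral defining \<open>(-\<Delta>)^s v(x0)\<close>, the part
  outside the ball is moved inside by the inversion in the sphere; by the antisymmetry \<open>v = -v_\<lambda>\<close>
  and the minimality of \<open>x0\<close> the combined integrand is nonpositive, and on \<open>B(x0, \<rho>)\<close> it is at
  most \<open>v(x0) (3\<rho>)^(-N-2s)\<close>. Hence \<open>(-\<Delta>)^s v(x0) \<le> c v(x0) \<rho>^(-2s)\<close> with \<open>c > 0\<close> depending
  only on \<open>N\<close> and \<open>s\<close>, and the inequality at \<open>x0\<close> forces \<open>C |x0|^\<alpha> \<ge> c \<rho>^(-2s)\<close>, which is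
  impossible once \<open>\<rho>\<close> is small.\<close>

section \<open>Integrability of radial powers\<close>

lemma nn_integral_lborel_scaleR:
  fixes f :: "'a::euclidean_space \<Rightarrow> ennreal"
  assumes [measurable]: "f \<in> borel_measurable borel" and c: "c \<noteq> 0"
  shows "(\<integral>\<^sup>+x. f x \<partial>lborel) = ennreal (\<bar>c\<bar> ^ DIM('a)) * (\<integral>\<^sup>+x. f (c *\<^sub>R x) \<partial>lborel)"
  by (subst lborel_affine[OF c, of 0])
     (simp add: nn_integral_density nn_integral_distr nn_integral_cmult)

text \<open>Integration in dilation coordinates: every \<open>y \<noteq> 0\<close> is \<open>exp (-t) *\<^sub>R w\<close> for a unique
  \<open>t\<close> with \<open>w\<close> in the shell \<open>1 \<le> norm w < e\<close>; inserting \<open>1 = \<integral> indicator [0,1) (t + ln |y|) dt\<close>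
  and applying Fubini and a dilation produces the formula.\<close>
lemma nn_integral_lborel_dilation_shells:
  fixes g :: "'a::euclidean_space \<Rightarrow> ennreal"
  assumes [measurable]: "g \<in> borel_measurable borel" and g0: "g 0 = 0"
  shows "(\<integral>\<^sup>+y. g y \<partial>lborel) = (\<integral>\<^sup>+w. indicator {0..<1} (ln (norm w)) *
      (\<integral>\<^sup>+t. ennreal (exp (- real DIM('a) * t)) * g (exp (-t) *\<^sub>R w) \<partial>lborel) \<partial>lborel)"
proof -
  have unit: "(\<integral>\<^sup>+t. indicator {0..<1::real} (t + c) \<partial>lborel) = 1" for c
    using nn_integral_real_affine[of "indicator {0..<1::real}" 1 c] by (simp add: add.commute)
  have "(\<integral>\<^sup>+y. g y \<partial>lborel) = (\<integral>\<^sup>+y. (\<integral>\<^sup>+t. g y * indicator {0..<1::real} (t + ln (norm y)) \<partial>lborel) \<partial>lborel)"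
    by (simp add: nn_integral_cmult unit)
  also have "\<dots> = (\<integral>\<^sup>+t. (\<integral>\<^sup>+y. g y * indicator {0..<1::real} (t + ln (norm y)) \<partial>lborel) \<partial>lborel)"
    by (rule pair_sigma_finite.Fubini'[symmetric])
       (simp_all add: pair_sigma_finite_def lborel.sigma_finite_measure_axioms)
  also have "\<dots> = (\<integral>\<^sup>+t. (\<integral>\<^sup>+w. ennreal (exp (- real DIM('a) * t)) * g (exp (-t) *\<^sub>R w) *
      indicator {0..<1::real} (ln (norm w)) \<partial>lborel) \<partial>lborel)"
  proof (rule nn_integral_cong)
    fix t :: real
    have shift: "g (exp (-t) *\<^sub>R w) * indicator {0..<1::real} (t + ln (exp (-t) * norm w)) =
        g (exp (-t) *\<^sub>R w) * indicator {0..<1::real} (ln (norm w))" for w :: 'a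
      by (cases "w = 0") (simp_all add: g0 ln_mult_pos)
    have jac: "exp (-t) ^ DIM('a) = exp (- (real DIM('a) * t))"
      by (simp add: exp_of_nat_mult[symmetric] mult.commute)
    show "(\<integral>\<^sup>+y. g y * indicator {0..<1::real} (t + ln (norm y)) \<partial>lborel) =
        (\<integral>\<^sup>+w. ennreal (exp (- real DIM('a) * t)) * g (exp (-t) *\<^sub>R w) *
          indicator {0..<1::real} (ln (norm w)) \<partial>lborel)"
      by (subst nn_integral_lborel_scaleR[of _ "exp (-t)"])
         (simp_all add: jac shift nn_integral_cmult[symmetric] mult.assoc)
  qed
  also have "\<dots> = (\<integral>\<^sup>+w. (\<integral>\<^sup>+t. ennreal (exp (- real DIM('a) * t)) * g (exp (-t) *\<^sub>R w) *
      indicator {0..<1::real} (ln (norm w)) \<partial>lborel) \<partial>lborel)"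
    by (rule pair_sigma_finite.Fubini')
       (simp_all add: pair_sigma_finite_def lborel.sigma_finite_measure_axioms)
  also have "\<dots> = (\<integral>\<^sup>+w. indicator {0..<1} (ln (norm w)) *
      (\<integral>\<^sup>+t. ennreal (exp (- real DIM('a) * t)) * g (exp (-t) *\<^sub>R w) \<partial>lborel) \<partial>lborel)"
    by (intro nn_integral_cong) (simp add: nn_integral_cmult[symmetric] mult_ac)
  finally show ?thesis .
qed

lemma nn_integral_exp_neg_atLeast_finite:
  assumes "a > 0"
  shows "(\<integral>\<^sup>+t. ennreal (exp (- a * t)) * indicator {c..} t \<partial>lborel) < \<infinity>"
  using nn_integral_has_integral_lebesgue'[OF _ has_integral_exp_minus_to_infinity[OF assms]]
  by simp

lemma nn_integral_exp_atMost_finite: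
  assumes "a > 0"
  shows "(\<integral>\<^sup>+t. ennreal (exp (a * t)) * indicator {..c} t \<partial>lborel) < \<infinity>"
proof -
  have "(\<integral>\<^sup>+t. ennreal (exp (a * t)) * indicator {..c} t \<partial>lborel) =
      (\<integral>\<^sup>+t. ennreal (exp (- a * t)) * indicator {-c..} t \<partial>lborel)"
    using nn_integral_real_affine[of "\<lambda>t. ennreal (exp (a * t)) * indicator {..c} t" "-1" 0]
    by (simp add: indicator_def minus_le_iff)
  then show ?thesis
    using nn_integral_exp_neg_atLeast_finite[OF assms] by simp
qed

lemma nn_integral_lborel_finite_by_dilations:
  fixes h :: "'a::euclidean_space \<Rightarrow> ennreal"
  assumes [measurable]: "h \<in> borel_measurable borel" and "h 0 = 0"
    and shell_bound: "\<And>w. 1 \<le> norm w \<Longrightarrow> norm w < exp 1 \<Longrightarrow>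
       (\<integral>\<^sup>+t. ennreal (exp (- real DIM('a) * t)) * h (exp (-t) *\<^sub>R w) \<partial>lborel) \<le> B"
    and "B < \<infinity>"
  shows "(\<integral>\<^sup>+y. h y \<partial>lborel) < \<infinity>"
proof -
  have "(\<integral>\<^sup>+y. h y \<partial>lborel) = (\<integral>\<^sup>+w. indicator {0..<1} (ln (norm w)) *
      (\<integral>\<^sup>+t. ennreal (exp (- real DIM('a) * t)) * h (exp (-t) *\<^sub>R w) \<partial>lborel) \<partial>lborel)"
    by (rule nn_integral_lborel_dilation_shells) (simp_all add: assms)
  also have "\<dots> \<le> (\<integral>\<^sup>+w. B * indicator (cball (0::'a) (exp 1)) w \<partial>lborel)"
  proof (rule nn_integral_mono)
    fix w :: 'a
    have "1 \<le> norm w \<and> norm w < exp 1" if "0 \<le> ln (norm w)" "ln (norm w) < 1" "w \<noteq> 0"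
      using that by (metis exp_less_cancel_iff exp_ln ln_ge_zero_iff zero_less_norm_iff)
    then show "indicator {0..<1} (ln (norm w)) *
        (\<integral>\<^sup>+t. ennreal (exp (- real DIM('a) * t)) * h (exp (-t) *\<^sub>R w) \<partial>lborel)
        \<le> B * indicator (cball 0 (exp 1)) w"
      using shell_bound[of w] by (cases "w = 0") (auto simp: indicator_def assms(2))
  qed
  also have "\<dots> = B * emeasure lborel (cball (0::'a) (exp 1))"
    by (rule nn_integral_cmult_indicator) simp
  also have "\<dots> < \<infinity>"
    using \<open>B < \<infinity>\<close> emeasure_lborel_cball_finite[of "0::'a" "exp 1"]
    by (simp add: ennreal_mult_less_top)
  finally show ?thesis .
qed

lemma dilation_weight_norm_powr_le:
  fixes w :: "'a::real_normed_vector"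
  assumes "1 \<le> norm w" "norm w < exp 1" and "exp (-t) *\<^sub>R w \<in> S \<Longrightarrow> t \<in> T"
  shows "ennreal (exp (- n * t)) * ennreal (indicator S (exp (-t) *\<^sub>R w) * norm (exp (-t) *\<^sub>R w) powr q)
    \<le> ennreal (exp \<bar>q\<bar>) * (ennreal (exp (- (q + n) * t)) * indicator T t)"
proof -
  have w: "w \<noteq> 0"
    using assms(1) by auto
  have lnw: "0 \<le> ln (norm w)" "ln (norm w) < 1"
    using assms w ln_less_cancel_iff[of "norm w" "exp 1"] by auto
  have "q * ln (norm w) \<le> \<bar>q\<bar> * ln (norm w)"
    using lnw by (intro mult_right_mono) auto
  also have "\<dots> \<le> \<bar>q\<bar>"
    using lnw by (simp add: mult_left_le)
  finally have "- n * t + q * (ln (norm w) - t) \<le> \<bar>q\<bar> + - (q + n) * t"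
    by (simp add: algebra_simps)
  then have "exp (- n * t) * norm (exp (-t) *\<^sub>R w) powr q \<le> exp \<bar>q\<bar> * exp (- (q + n) * t)"
    using w by (simp add: powr_def ln_mult exp_add[symmetric] algebra_simps)
  then show ?thesis
    using assms(3)
    by (cases "exp (-t) *\<^sub>R w \<in> S")
       (simp_all add: ennreal_mult'[symmetric] ennreal_leI mult.assoc del: ennreal_indicator)
qed

lemma nn_integral_norm_powr_outside_ball_finite:
  fixes p r :: real
  assumes p: "p > real DIM('a::euclidean_space)" and r: "r > 0"
  shows "(\<integral>\<^sup>+z. ennreal (indicator {z::'a. r \<le> norm z} z * norm z powr (-p)) \<partial>lborel) < \<infinity>"
proof (rule nn_integral_lborel_finite_by_dilations)
  show "(\<integral>\<^sup>+t. ennreal (exp \<bar>-p\<bar>) * (ennreal (exp (- (-p + real DIM('a)) * t)) *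
      indicator {..1 - ln r} t) \<partial>lborel) < \<infinity>"
    using nn_integral_exp_atMost_finite[of "p - real DIM('a)" "1 - ln r"] p
    by (simp add: nn_integral_cmult ennreal_mult_less_top algebra_simps)
  fix w :: 'a
  assume w: "1 \<le> norm w" "norm w < exp 1"
  have "t \<le> 1 - ln r" if "r \<le> norm (exp (-t) *\<^sub>R w)" for t
  proof -
    have "0 < norm w"
      using w by linarith
    then have "ln r \<le> ln (norm w) - t"
      using that r ln_le_cancel_iff[of r "exp (-t) * norm w"] by (simp add: ln_mult)
    moreover have "ln (norm w) < 1"
      using w \<open>0 < norm w\<close> ln_less_cancel_iff[of "norm w" "exp 1"] by simp
    ultimately show ?thesis by linarith
  qed
  then show "(\<integral>\<^sup>+t. ennreal (exp (- real DIM('a) * t)) * ennreal (indicator {z. r \<le> norm z}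
      (exp (-t) *\<^sub>R w) * norm (exp (-t) *\<^sub>R w) powr (-p)) \<partial>lborel)
      \<le> (\<integral>\<^sup>+t. ennreal (exp \<bar>-p\<bar>) * (ennreal (exp (- (-p + real DIM('a)) * t)) *
      indicator {..1 - ln r} t) \<partial>lborel)"
    by (intro nn_integral_mono dilation_weight_norm_powr_le w) auto
qed (use r in simp_all)

lemma nn_integral_norm_powr_inside_ball_finite:
  fixes \<beta> r :: real
  assumes b: "\<beta> < real DIM('a::euclidean_space)" and r: "r > 0"
  shows "(\<integral>\<^sup>+z. ennreal (indicator {z::'a. norm z < r} z * norm z powr (-\<beta>)) \<partial>lborel) < \<infinity>"
proof (rule nn_integral_lborel_finite_by_dilations)
  show "(\<integral>\<^sup>+t. ennreal (exp \<bar>-\<beta>\<bar>) * (ennreal (exp (- (-\<beta> + real DIM('a)) * t)) *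
      indicator {-ln r..} t) \<partial>lborel) < \<infinity>"
    using nn_integral_exp_neg_atLeast_finite[of "real DIM('a) - \<beta>" "- ln r"] b
    by (simp add: nn_integral_cmult ennreal_mult_less_top algebra_simps)
  fix w :: 'a
  assume w: "1 \<le> norm w" "norm w < exp 1"
  have "- ln r \<le> t" if "norm (exp (-t) *\<^sub>R w) < r" for t
  proof -
    have "0 < norm w"
      using w by linarith
    then have "ln (norm w) - t < ln r"
      using that r ln_less_cancel_iff[of "exp (-t) * norm w" r] by (simp add: ln_mult)
    moreover have "0 \<le> ln (norm w)"
      using w by simp
    ultimately show ?thesis by linarith
  qed
  then show "(\<integral>\<^sup>+t. ennreal (exp (- real DIM('a) * t)) * ennreal (indicator {z. norm z < r}
      (exp (-t) *\<^sub>R w) * norm (exp (-t) *\<^sub>R w) powr (-\<beta>)) \<partial>lborel)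
      \<le> (\<integral>\<^sup>+t. ennreal (exp \<bar>-\<beta>\<bar>) * (ennreal (exp (- (-\<beta> + real DIM('a)) * t)) *
      indicator {-ln r..} t) \<partial>lborel)"
    by (intro nn_integral_mono dilation_weight_norm_powr_le w) auto
qed simp_all

lemma integrable_lborel_translate:
  fixes f :: "'a::euclidean_space \<Rightarrow> real"
  assumes [measurable]: "f \<in> borel_measurable borel" and "integrable lborel f"
  shows "integrable lborel (\<lambda>y. f (y - c))"
proof -
  have "integrable (distr lborel borel ((+) c)) (\<lambda>y. f (y - c))"
    using assms by (subst integrable_distr_eq) simp_all
  then show ?thesis
    by (simp add: lborel_distr_plus)
qed

lemma integrable_norm_diff_powr_outside_ball:
  fixes p r :: real and x0 :: "'a::euclidean_space"
  assumes "p > real DIM('a)" "r > 0"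
  shows "integrable lborel (\<lambda>y. indicator {y. r \<le> norm (x0 - y)} y * norm (x0 - y) powr (-p))"
proof -
  have "integrable lborel (\<lambda>z::'a. indicator {z. r \<le> norm z} z * norm z powr (-p))"
    using nn_integral_norm_powr_outside_ball_finite[OF assms] by (intro integrableI_bounded) simp_all
  then have "integrable lborel (\<lambda>y. indicator {z. r \<le> norm z} (y - x0) * norm (y - x0) powr (-p))"
    by (rule integrable_lborel_translate[rotated]) simp
  then show ?thesis
    by (simp add: norm_minus_commute indicator_def)
qed

lemma integrable_norm_diff_powr_inside_ball:
  fixes \<beta> r :: real and x0 :: "'a::euclidean_space"
  assumes "\<beta> < real DIM('a)" "r > 0"
  shows "integrable lborel (\<lambda>y. indicator {y. norm (x0 - y) < r} y * norm (x0 - y) powr (-\<beta>))"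
proof -
  have "integrable lborel (\<lambda>z::'a. indicator {z. norm z < r} z * norm z powr (-\<beta>))"
    using nn_integral_norm_powr_inside_ball_finite[OF assms] by (intro integrableI_bounded) simp_all
  then have "integrable lborel (\<lambda>y. indicator {z. norm z < r} (y - x0) * norm (y - x0) powr (-\<beta>))"
    by (rule integrable_lborel_translate[rotated]) simp
  then show ?thesis
    by (simp add: norm_minus_commute indicator_def)
qed

lemma one_plus_norm_powr_le_norm_diff_powr:
  fixes x0 y :: "'a::real_normed_vector"
  assumes p: "p > 0" and r: "r > 0" and d: "r \<le> norm (x0 - y)"
  shows "1 + norm y powr p \<le> (r powr (-p) + (1 + norm x0 / r) powr p) * norm (x0 - y) powr p"
proof -
  let ?d = "norm (x0 - y)"
  have "1 = r powr (-p) * r powr p"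
    using r by (simp add: powr_minus)
  also have "\<dots> \<le> r powr (-p) * ?d powr p"
    using r d p by (intro mult_left_mono powr_mono2) auto
  finally have one: "1 \<le> r powr (-p) * ?d powr p" .
  have "norm x0 \<le> norm x0 / r * ?d"
    using mult_left_mono[OF d, of "norm x0 / r"] r by simp
  then have "norm y \<le> (1 + norm x0 / r) * ?d"
    using norm_triangle_ineq4[of x0 "x0 - y"] by (simp add: algebra_simps)
  then have "norm y powr p \<le> ((1 + norm x0 / r) * ?d) powr p"
    using p by (intro powr_mono2) auto
  also have "\<dots> = (1 + norm x0 / r) powr p * ?d powr p"
    using r by (subst powr_mult) auto
  finally show ?thesis
    using one by (simp add: algebra_simps)
qed

lemma set_integrable_frac_kernel_outside_ball:
  fixes v :: "'a::euclidean_space \<Rightarrow> real" and x0 :: 'a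
  assumes p: "p > real DIM('a)" and r: "r > 0"
    and [measurable]: "v \<in> borel_measurable borel"
    and v: "integrable lborel (\<lambda>x. v x / (1 + norm x powr p))"
  shows "set_integrable lborel {y. r \<le> dist x0 y} (\<lambda>y. (v x0 - v y) / norm (x0 - y) powr p)"
  unfolding set_integrable_def
proof (rule Bochner_Integration.integrable_bound)
  define c where "c = r powr (-p) + (1 + norm x0 / r) powr p"
  let ?T = "\<lambda>y. indicator {y. r \<le> norm (x0 - y)} y * norm (x0 - y) powr (-p)"
  show "integrable lborel (\<lambda>y. \<bar>v x0\<bar> * ?T y + c * \<bar>v y / (1 + norm y powr p)\<bar>)"
    using integrable_norm_diff_powr_outside_ball[OF p r] integrable_abs[OF v]
    by (intro Bochner_Integration.integrable_add Bochner_Integration.integrable_mult_right)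
  have p0: "p > 0"
    using p by (smt (verit) of_nat_0_le_iff)
  show "AE y in lborel. norm (indicator {y. r \<le> dist x0 y} y *\<^sub>R ((v x0 - v y) / norm (x0 - y) powr p))
      \<le> norm (\<bar>v x0\<bar> * ?T y + c * \<bar>v y / (1 + norm y powr p)\<bar>)"
  proof (intro AE_I2)
    fix y :: 'a
    show "norm (indicator {y. r \<le> dist x0 y} y *\<^sub>R ((v x0 - v y) / norm (x0 - y) powr p))
      \<le> norm (\<bar>v x0\<bar> * ?T y + c * \<bar>v y / (1 + norm y powr p)\<bar>)"
    proof (cases "r \<le> dist x0 y")
      case True
      let ?d = "norm (x0 - y)"
      have dd: "r \<le> ?d"
        using True by (simp add: dist_norm)
      have dp: "?d powr p > 0"
        using dd r by auto
      have w0: "1 + norm y powr p > 0"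
        by (smt (verit) powr_ge_zero)
      have w: "1 + norm y powr p \<le> c * ?d powr p"
        unfolding c_def by (rule one_plus_norm_powr_le_norm_diff_powr[OF p0 r dd])
      have "\<bar>v x0 - v y\<bar> / ?d powr p \<le> (\<bar>v x0\<bar> + \<bar>v y\<bar>) / ?d powr p"
        using dp by (intro divide_right_mono) auto
      also have "\<dots> = \<bar>v x0\<bar> * ?d powr (-p) + \<bar>v y\<bar> / ?d powr p"
        by (simp add: powr_minus divide_inverse distrib_right)
      also have "\<bar>v y\<bar> / ?d powr p \<le> c * (\<bar>v y\<bar> / (1 + norm y powr p))"
        using mult_left_mono[OF w, of "\<bar>v y\<bar>"] dp w0 by (simp add: field_simps)
      finally have "\<bar>v x0 - v y\<bar> / ?d powr p \<le> \<bar>v x0\<bar> * ?d powr (-p) + c * (\<bar>v y\<bar> / (1 + norm y powr p))"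
        by simp
      moreover have "0 \<le> c"
        unfolding c_def by simp
      ultimately show ?thesis
        using dd by (simp add: abs_divide dist_norm)
    qed simp
  qed
qed measurable

section \<open>Inversion in a sphere\<close>

definition sphere_inversion :: "real \<Rightarrow> 'a::euclidean_space \<Rightarrow> 'a" where
  "sphere_inversion lam z = (lam^2 / (norm z)^2) *\<^sub>R z"

definition inversion_jacobian :: "real \<Rightarrow> 'a::euclidean_space \<Rightarrow> real" where
  "inversion_jacobian lam z = (lam / norm z) ^ (2 * DIM('a))"

lemma sphere_inversion_measurable [measurable]: "sphere_inversion lam \<in> borel_measurable borel"
  unfolding sphere_inversion_def by measurable

lemma inversion_jacobian_measurable [measurable]:
  "(inversion_jacobian lam :: 'a::euclidean_space \<Rightarrow> real) \<in> borel_measurable borel"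
  unfolding inversion_jacobian_def by measurable

lemma inversion_jacobian_nonneg: "lam > 0 \<Longrightarrow> 0 \<le> inversion_jacobian lam z"
  unfolding inversion_jacobian_def by simp

lemma norm_sphere_inversion: "lam > 0 \<Longrightarrow> norm (sphere_inversion lam z) = lam^2 / norm z"
  unfolding sphere_inversion_def by (cases "z = 0") (auto simp: power2_eq_square)

lemma kelvin_sphere_inversion:
  "kelvin s lam v z = (lam / norm z) powr (real DIM('a) - 2 * s) * v (sphere_inversion lam z)"
  for z :: "'a::euclidean_space"
  unfolding kelvin_def sphere_inversion_def ..

text \<open>On a ray the inversion is the reflection \<open>t \<mapsto> a - t\<close> of the dilation parameter.\<close>
lemma sphere_inversion_dilation:
  fixes w :: "'a::euclidean_space"
  assumes lam: "lam > 0" and w: "w \<noteq> 0"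
  defines "a \<equiv> 2 * ln (norm w / lam)"
  shows "sphere_inversion lam (exp (-t) *\<^sub>R w) = exp (-(a - t)) *\<^sub>R w"
    and "exp (-t) ^ DIM('a) * inversion_jacobian lam (exp (-t) *\<^sub>R w) = exp (-(a - t)) ^ DIM('a)"
proof -
  have nw: "norm w > 0"
    using w by simp
  have "exp (-a) = exp (ln (lam / norm w)) ^ 2"
    unfolding a_def using nw lam by (simp add: ln_div exp_of_nat_mult[symmetric])
  then have e: "exp (-(a - t)) = lam^2 * exp t / (norm w)^2"
    using nw lam by (simp add: exp_diff exp_minus power_divide field_simps)
  show "sphere_inversion lam (exp (-t) *\<^sub>R w) = exp (-(a - t)) *\<^sub>R w"
    unfolding sphere_inversion_def e using nw
    by (simp add: power_mult_distrib exp_minus field_simps power2_eq_square)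
  have "exp (-t) ^ DIM('a) * inversion_jacobian lam (exp (-t) *\<^sub>R w) =
      (exp (-t) * (lam / (exp (-t) * norm w))^2) ^ DIM('a)"
    unfolding inversion_jacobian_def by (simp add: power_mult power_mult_distrib)
  also have "exp (-t) * (lam / (exp (-t) * norm w))^2 = exp (-(a - t))"
    unfolding e using nw by (simp add: exp_minus field_simps power2_eq_square)
  finally show "exp (-t) ^ DIM('a) * inversion_jacobian lam (exp (-t) *\<^sub>R w) = exp (-(a - t)) ^ DIM('a)" .
qed

lemma nn_integral_sphere_inversion:
  fixes g :: "'a::euclidean_space \<Rightarrow> ennreal"
  assumes [measurable]: "g \<in> borel_measurable borel" and lam: "lam > 0"
  shows "(\<integral>\<^sup>+z. g (sphere_inversion lam z) * ennreal (inversion_jacobian lam z) * indicator (-{0}) z \<partial>lborel)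
       = (\<integral>\<^sup>+y. g y * indicator (-{0}) y \<partial>lborel)"
proof -
  let ?G = "\<lambda>z. g (sphere_inversion lam z) * ennreal (inversion_jacobian lam z) * indicator (-{0}) z"
  let ?g = "\<lambda>y. g y * indicator (-{0}) y :: ennreal"
  have exp_pow: "exp (- real DIM('a) * t) = exp (-t) ^ DIM('a)" for t
    by (simp add: exp_of_nat_mult[symmetric])
  have ray: "(\<integral>\<^sup>+t. ennreal (exp (- real DIM('a) * t)) * ?G (exp (-t) *\<^sub>R w) \<partial>lborel)
          = (\<integral>\<^sup>+t. ennreal (exp (- real DIM('a) * t)) * ?g (exp (-t) *\<^sub>R w) \<partial>lborel)" for w :: 'a
  proof (cases "w = 0")
    case False
    define a where "a = 2 * ln (norm w / lam)"
    let ?h = "\<lambda>t. ennreal (exp (- real DIM('a) * t)) * ?g (exp (-t) *\<^sub>R w)"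
    have "ennreal (exp (- real DIM('a) * t)) * ?G (exp (-t) *\<^sub>R w) = ?h (a + (-1) * t)" for t
    proof -
      note inv = sphere_inversion_dilation[OF lam False, of t, folded a_def]
      have "ennreal (exp (- real DIM('a) * t)) * ?G (exp (-t) *\<^sub>R w)
          = ennreal (exp (-t) ^ DIM('a) * inversion_jacobian lam (exp (-t) *\<^sub>R w)) *
            g (sphere_inversion lam (exp (-t) *\<^sub>R w))"
        using False lam unfolding exp_pow
        by (simp add: ennreal_mult' inversion_jacobian_nonneg mult_ac)
      also have "\<dots> = ?h (a - t)"
        unfolding inv exp_pow using False by (simp add: mult_ac)
      finally show ?thesis
        by simp
    qed
    then show ?thesis
      using nn_integral_real_affine[of ?h "-1" a] by simp
  qed simp
  have "(\<integral>\<^sup>+z. ?G z \<partial>lborel) = (\<integral>\<^sup>+w. indicator {0..<1} (ln (norm w)) *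
      (\<integral>\<^sup>+t. ennreal (exp (- real DIM('a) * t)) * ?G (exp (-t) *\<^sub>R w) \<partial>lborel) \<partial>lborel)"
    by (rule nn_integral_lborel_dilation_shells) auto
  also have "\<dots> = (\<integral>\<^sup>+z. ?g z \<partial>lborel)"
    unfolding ray by (rule nn_integral_lborel_dilation_shells[symmetric]) auto
  finally show ?thesis .
qed

lemma sphere_inversion_outside_iff:
  "lam > 0 \<Longrightarrow> z \<noteq> 0 \<Longrightarrow> lam < norm (sphere_inversion lam z) \<longleftrightarrow> norm z < lam"
  for z :: "'a::euclidean_space"
  by (simp add: norm_sphere_inversion field_simps power2_eq_square)

lemma distr_sphere_inversion:
  fixes lam :: real
  assumes lam: "lam > 0"
  defines "S \<equiv> ball (0::'a::euclidean_space) lam - {0}" and "U \<equiv> {y::'a. lam < norm y}"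
  shows "distr (density lborel (\<lambda>z. ennreal (indicator S z * inversion_jacobian lam z))) lborel
      (sphere_inversion lam) = density lborel (\<lambda>y. ennreal (indicator U y))"
proof (rule measure_eqI)
  have [measurable]: "S \<in> sets borel" "U \<in> sets borel"
    unfolding S_def U_def by auto
  fix A
  assume "A \<in> sets (distr (density lborel (\<lambda>z. ennreal (indicator S z * inversion_jacobian lam z)))
    lborel (sphere_inversion lam))"
  then have A [measurable]: "A \<in> sets borel"
    by simp
  have preimage: "sphere_inversion lam -` A \<in> sets borel"
    using measurable_sets[OF sphere_inversion_measurable A, of lam] by simp
  let ?g = "\<lambda>y. indicator A y * ennreal (indicator U y)"
  have "emeasure (distr (density lborel (\<lambda>z. ennreal (indicator S z * inversion_jacobian lam z))) lborel
      (sphere_inversion lam)) A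
      = (\<integral>\<^sup>+z. ennreal (indicator S z * inversion_jacobian lam z) *
          indicator (sphere_inversion lam -` A) z \<partial>lborel)"
    by (subst emeasure_distr)
       (simp_all add: emeasure_density nn_integral_set_ennreal mult.commute preimage)
  also have "\<dots> = (\<integral>\<^sup>+z. ?g (sphere_inversion lam z) * ennreal (inversion_jacobian lam z) *
      indicator (-{0}) z \<partial>lborel)"
    using sphere_inversion_outside_iff[OF lam] inversion_jacobian_nonneg[OF lam]
    by (intro nn_integral_cong) (auto simp: S_def U_def indicator_def)
  also have "\<dots> = (\<integral>\<^sup>+y. ?g y * indicator (-{0}) y \<partial>lborel)"
    by (rule nn_integral_sphere_inversion) (simp_all add: lam)
  also have "\<dots> = emeasure (density lborel (\<lambda>y. ennreal (indicator U y))) A"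
    using lam by (simp add: emeasure_density, intro nn_integral_cong) (auto simp: U_def indicator_def)
  finally show "emeasure (distr (density lborel (\<lambda>z. ennreal (indicator S z * inversion_jacobian lam z)))
      lborel (sphere_inversion lam)) A = emeasure (density lborel (\<lambda>y. ennreal (indicator U y))) A" .
qed simp

lemma
  fixes f :: "'a::euclidean_space \<Rightarrow> real"
  assumes lam: "lam > 0" and [measurable]: "f \<in> borel_measurable borel"
    and f: "set_integrable lborel {y. lam < norm y} f"
  shows set_integrable_sphere_inversion:
      "set_integrable lborel (ball 0 lam - {0}) (\<lambda>z. inversion_jacobian lam z * f (sphere_inversion lam z))"
    and set_integral_sphere_inversion:
      "(LINT y:{y. lam < norm y}|lborel. f y) =
       (LINT z:(ball 0 lam - {0})|lborel. inversion_jacobian lam z * f (sphere_inversion lam z))"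
proof -
  define S where "S = ball (0::'a) lam - {0}"
  define U where "U = {y::'a. lam < norm y}"
  have [measurable]: "S \<in> sets borel" "U \<in> sets borel"
    unfolding S_def U_def by auto
  let ?\<mu> = "density lborel (\<lambda>z. ennreal (indicator S z * inversion_jacobian lam z))"
  have distr: "distr ?\<mu> lborel (sphere_inversion lam) = density lborel (\<lambda>y. ennreal (indicator U y))"
    unfolding S_def U_def by (rule distr_sphere_inversion[OF lam])
  have nn: "AE x in lborel. 0 \<le> indicator S x * inversion_jacobian lam x"
    by (simp add: inversion_jacobian_nonneg[OF lam])
  have "integrable (density lborel (\<lambda>y. ennreal (indicator U y))) f"
    using f unfolding U_def[symmetric] set_integrable_def by (subst integrable_density) simp_all
  then have "integrable ?\<mu> (\<lambda>z. f (sphere_inversion lam z))"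
    by (simp add: distr[symmetric] integrable_distr_eq)
  then show "set_integrable lborel (ball 0 lam - {0}) (\<lambda>z. inversion_jacobian lam z * f (sphere_inversion lam z))"
    unfolding set_integrable_def S_def[symmetric] using nn
    by (subst (asm) integrable_density) (simp_all add: mult.assoc)
  have "(LINT y:U|lborel. f y) = integral\<^sup>L (density lborel (\<lambda>y. ennreal (indicator U y))) f"
    unfolding set_lebesgue_integral_def by (subst integral_density) simp_all
  also have "\<dots> = integral\<^sup>L ?\<mu> (\<lambda>z. f (sphere_inversion lam z))"
    by (simp add: distr[symmetric] integral_distr)
  also have "\<dots> = (LINT z:S|lborel. inversion_jacobian lam z * f (sphere_inversion lam z))"
    unfolding set_lebesgue_integral_def using nn by (subst integral_density) (simp_all add: mult.assoc)
  finally show "(LINT y:{y. lam < norm y}|lborel. f y) =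
      (LINT z:(ball 0 lam - {0})|lborel. inversion_jacobian lam z * f (sphere_inversion lam z))"
    unfolding S_def U_def .
qed

section \<open>The kernel at a negative minimum\<close>

lemma reflected_distance_sq:
  fixes x z :: "'a::euclidean_space"
  assumes lam: "lam > 0" and z: "z \<noteq> 0"
  shows "(norm z * norm (x - sphere_inversion lam z) / lam)^2 =
    (norm (x - z))^2 + (lam^2 - (norm x)^2) * (lam^2 - (norm z)^2) / lam^2"
proof -
  have norm_diff_sq: "(norm (a - c *\<^sub>R b))^2 = (norm a)^2 - 2 * c * (a \<bullet> b) + c^2 * (norm b)^2"
    for a b :: 'a and c :: real
    unfolding power2_norm_eq_inner by (simp add: inner_diff inner_commute algebra_simps power2_eq_square)
  have xz: "(norm (x - z))^2 = (norm x)^2 - 2 * (x \<bullet> z) + (norm z)^2"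
    using norm_diff_sq[of x 1 z] by simp
  show ?thesis
    using z lam unfolding power_mult_distrib power_divide sphere_inversion_def norm_diff_sq xz
    by (simp add: field_simps power2_eq_square)
qed

lemma reflected_distance_ge:
  fixes x z :: "'a::euclidean_space"
  assumes lam: "lam > 0" and z: "z \<noteq> 0" "norm z < lam" and x: "norm x < lam"
  shows "norm (x - z) \<le> norm z * norm (x - sphere_inversion lam z) / lam"
    and "0 < norm z * norm (x - sphere_inversion lam z) / lam"
proof -
  define Q where "Q = norm z * norm (x - sphere_inversion lam z) / lam"
  have "(norm x)^2 < lam^2" "(norm z)^2 < lam^2"
    using x z lam by (simp_all add: power_strict_mono)
  then have "0 < (lam^2 - (norm x)^2) * (lam^2 - (norm z)^2) / lam^2"
    using lam by simp
  then have sq: "(norm (x - z))^2 < Q^2"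
    unfolding Q_def reflected_distance_sq[OF lam z(1)] by simp
  moreover have "0 \<le> Q"
    unfolding Q_def using lam by simp
  ultimately show "norm (x - z) \<le> Q"
    by (auto intro: power_less_imp_less_base less_imp_le)
  have "0 < Q^2"
    using sq by (rule le_less_trans[OF zero_le_power2])
  then show "0 < Q"
    using \<open>0 \<le> Q\<close> by (simp add: zero_less_power2 order_le_neq_trans)
qed

lemma reflected_distance_le_near_sphere:
  fixes x z :: "'a::euclidean_space"
  assumes lam: "lam > 0" and z: "z \<noteq> 0" "norm z < lam"
    and x: "norm x < lam" and xz: "norm (x - z) < lam - norm x"
  shows "norm z * norm (x - sphere_inversion lam z) / lam \<le> 3 * (lam - norm x)"
proof -
  define \<rho> where "\<rho> = lam - norm x"
  have \<rho>: "0 < \<rho>"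
    unfolding \<rho>_def using x by simp
  have "lam^2 - (norm x)^2 = \<rho> * (lam + norm x)"
    unfolding \<rho>_def by (simp add: power2_eq_square algebra_simps)
  also have "\<dots> \<le> 2 * lam * \<rho>"
    using \<rho> x by (simp add: mult.commute mult_left_mono)
  finally have x_factor: "lam^2 - (norm x)^2 \<le> 2 * lam * \<rho>" .
  have "lam - norm z < 2 * \<rho>"
    using xz norm_triangle_ineq3[of x z] unfolding \<rho>_def by simp
  then have "(lam - norm z) * (lam + norm z) \<le> (2 * \<rho>) * (2 * lam)"
    using z lam by (intro mult_mono) auto
  then have z_factor: "lam^2 - (norm z)^2 \<le> 4 * lam * \<rho>"
    by (simp add: power2_eq_square algebra_simps)
  have "(norm z * norm (x - sphere_inversion lam z) / lam)^2 =
      (norm (x - z))^2 + (lam^2 - (norm x)^2) * (lam^2 - (norm z)^2) / lam^2"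
    by (rule reflected_distance_sq[OF lam z(1)])
  also have "\<dots> \<le> \<rho>^2 + (2 * lam * \<rho>) * (4 * lam * \<rho>) / lam^2"
    using xz x_factor z_factor x z lam \<rho> unfolding \<rho>_def[symmetric]
    by (intro add_mono power_mono divide_right_mono mult_mono) (auto simp: abs_le_square_iff)
  also have "\<dots> = (3 * \<rho>)^2"
    using lam by (simp add: field_simps power2_eq_square)
  finally have "(norm z * norm (x - sphere_inversion lam z) / lam)^2 \<le> (3 * \<rho>)^2" .
  then show ?thesis
    unfolding \<rho>_def[symmetric] by (rule power2_le_imp_le) (use \<rho> in simp)
qed

text \<open>Oddness under the Kelvin transform turns the kernel at the inverted point into a kernel at
  \<open>z\<close> with distance \<open>Q\<close>; the Jacobian exactly absorbs the change of scale.\<close>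
lemma frac_kernel_sphere_inversion:
  fixes v :: "'a::euclidean_space \<Rightarrow> real" and x z :: 'a
  assumes lam: "lam > 0" and z: "z \<noteq> 0" and odd: "v z = - kelvin s lam v z"
  defines "p \<equiv> real DIM('a) + 2 * s"
    and "R \<equiv> (lam / norm z) powr (real DIM('a) - 2 * s)"
    and "Q \<equiv> norm z * norm (x - sphere_inversion lam z) / lam"
  assumes Q: "Q > 0"
  shows "inversion_jacobian lam z * ((m - v (sphere_inversion lam z)) / norm (x - sphere_inversion lam z) powr p)
    = (m * R + v z) * Q powr (-p)"
proof -
  define t where "t = lam / norm z"
  have t: "t > 0"
    unfolding t_def using lam z by simp
  have R: "R > 0"
    unfolding R_def using lam z by simp
  have inverted_value: "v (sphere_inversion lam z) = - v z / R"
    using odd R unfolding kelvin_sphere_inversion R_def by (simp add: field_simps)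
  have inverted_distance: "norm (x - sphere_inversion lam z) = t * Q"
    unfolding t_def Q_def using z lam by simp
  have jacobian: "inversion_jacobian lam z = R * t powr p"
  proof -
    have "inversion_jacobian lam z = t ^ (2 * DIM('a))"
      unfolding inversion_jacobian_def t_def ..
    also have "\<dots> = t powr real (2 * DIM('a))"
      using t by (simp only: powr_realpow)
    also have "\<dots> = R * t powr p"
      unfolding R_def p_def t_def[symmetric] by (simp add: powr_add[symmetric])
    finally show ?thesis .
  qed
  show ?thesis
    unfolding inverted_value inverted_distance jacobian
    using R t Q by (simp add: powr_mult powr_minus field_simps)
qed

lemma frac_kernel_pair_le_reflected_distance:
  fixes v :: "'a::euclidean_space \<Rightarrow> real" and x0 z :: 'a
  assumes lam: "lam > 0" and s: "0 < s" "2 * s < real DIM('a)"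
    and z: "z \<noteq> 0" "norm z < lam" and x0: "norm x0 < lam"
    and min: "v x0 < 0" "v x0 \<le> v z"
    and odd: "v z = - kelvin s lam v z"
    and near: "\<not> r \<le> dist x0 z \<Longrightarrow> v z \<le> 0"
  defines "p \<equiv> real DIM('a) + 2 * s"
  shows "indicator {y. r \<le> dist x0 y} z * ((v x0 - v z) / norm (x0 - z) powr p)
      + inversion_jacobian lam z * ((v x0 - v (sphere_inversion lam z)) / norm (x0 - sphere_inversion lam z) powr p)
     \<le> v x0 * (norm z * norm (x0 - sphere_inversion lam z) / lam) powr (-p)"
proof -
  define m where "m = v x0"
  define R where "R = (lam / norm z) powr (real DIM('a) - 2 * s)"
  define Q where "Q = norm z * norm (x0 - sphere_inversion lam z) / lam"
  define K where "K = norm (x0 - z)"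
  have p: "p > 0"
    unfolding p_def using s by simp
  have R: "R \<ge> 1"
    unfolding R_def using z s by (intro ge_one_powr_ge_zero) (simp_all add: le_divide_eq_1)
  have KQ: "K \<le> Q" and Q: "Q > 0"
    unfolding K_def Q_def using reflected_distance_ge[OF lam z x0] by auto
  have reflected: "inversion_jacobian lam z * ((m - v (sphere_inversion lam z)) /
      norm (x0 - sphere_inversion lam z) powr p) = (m * R + v z) * Q powr (-p)"
    using frac_kernel_sphere_inversion[OF lam z(1) odd Q[unfolded Q_def]]
    unfolding R_def Q_def p_def .
  have "indicator {y. r \<le> dist x0 y} z * ((m - v z) / K powr p) + (m * R + v z) * Q powr (-p)
      \<le> m * Q powr (-p)"
  proof (cases "r \<le> dist x0 z")
    case True
    have "(m - v z) / K powr p \<le> (m - v z) * Q powr (-p)"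
    proof (cases "K = 0")
      case False
      then have "Q powr (-p) \<le> K powr (-p)"
        using KQ p by (intro powr_mono2') (auto simp: K_def)
      then show ?thesis
        using min unfolding m_def by (simp add: powr_minus divide_inverse mult_left_mono_neg)
    qed (simp add: K_def m_def)
    moreover have "(m + m * R) * Q powr (-p) \<le> m * Q powr (-p)"
      using Q min R unfolding m_def
      by (intro mult_right_mono) (auto simp: mult_nonpos_nonneg)
    ultimately show ?thesis
      using True by (simp add: algebra_simps)
  next
    case False
    have "m * R \<le> m * 1"
      using R min unfolding m_def by (intro mult_left_mono_neg) auto
    then have "m * R + v z \<le> m"
      using near False by simp
    then show ?thesis
      using False Q by (simp add: mult_right_mono)
  qed
  then show ?thesis
    unfolding m_def K_def Q_def reflected[unfolded m_def] .
qed

lemma frac_kernel_pair_le: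
  fixes v :: "'a::euclidean_space \<Rightarrow> real" and x0 z :: 'a
  assumes lam: "lam > 0" and s: "0 < s" "2 * s < real DIM('a)"
    and z: "z \<noteq> 0" "norm z < lam" and x0: "norm x0 < lam"
    and min: "v x0 < 0" "v x0 \<le> v z"
    and odd: "v z = - kelvin s lam v z"
    and near: "\<not> r \<le> dist x0 z \<Longrightarrow> v z \<le> 0"
  defines "p \<equiv> real DIM('a) + 2 * s"
  shows "indicator {y. r \<le> dist x0 y} z * ((v x0 - v z) / norm (x0 - z) powr p)
      + inversion_jacobian lam z * ((v x0 - v (sphere_inversion lam z)) / norm (x0 - sphere_inversion lam z) powr p)
     \<le> v x0 * (3 * (lam - norm x0)) powr (-p) * indicator (ball x0 (lam - norm x0)) z"
proof -
  define Q where "Q = norm z * norm (x0 - sphere_inversion lam z) / lam"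
  have p: "p > 0"
    unfolding p_def using s by simp
  have Q: "Q > 0"
    unfolding Q_def using reflected_distance_ge[OF lam z x0] by auto
  have "indicator {y. r \<le> dist x0 y} z * ((v x0 - v z) / norm (x0 - z) powr p)
      + inversion_jacobian lam z * ((v x0 - v (sphere_inversion lam z)) / norm (x0 - sphere_inversion lam z) powr p)
     \<le> v x0 * Q powr (-p)"
    unfolding Q_def p_def by (rule frac_kernel_pair_le_reflected_distance[OF lam s z x0 min odd near])
  also have "\<dots> \<le> v x0 * (3 * (lam - norm x0)) powr (-p) * indicator (ball x0 (lam - norm x0)) z"
  proof (cases "z \<in> ball x0 (lam - norm x0)")
    case True
    then have "Q \<le> 3 * (lam - norm x0)"
      unfolding Q_def using reflected_distance_le_near_sphere[OF lam z x0] by (simp add: dist_norm)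
    then have "(3 * (lam - norm x0)) powr (-p) \<le> Q powr (-p)"
      using Q p by (intro powr_mono2') auto
    then show ?thesis
      using True min by (simp add: mult_left_mono_neg)
  qed (use min Q in \<open>simp add: mult_nonpos_nonneg\<close>)
  finally show ?thesis .
qed

text \<open>Splitting the exterior of \<open>ball x0 r\<close> into the parts inside, on and outside the sphere,
  the part on the sphere is nonpositive and the part outside is moved inside by the inversion.\<close>
lemma truncated_frac_integral_le_reflected:
  fixes v :: "'a::euclidean_space \<Rightarrow> real" and x0 :: 'a
  assumes lam: "lam > 0" and p: "p > real DIM('a)"
    and [measurable]: "v \<in> borel_measurable borel"
    and v: "integrable lborel (\<lambda>x. v x / (1 + norm x powr p))"
    and sphere: "\<And>y. norm y = lam \<Longrightarrow> v y = 0" and "v x0 < 0"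
    and r: "0 < r" "r < lam - norm x0"
  defines "F \<equiv> \<lambda>y. (v x0 - v y) / norm (x0 - y) powr p"
  shows "set_integrable lborel ({y. r \<le> dist x0 y} \<inter> ball 0 lam) F"
    and "set_integrable lborel (ball 0 lam - {0}) (\<lambda>z. inversion_jacobian lam z * F (sphere_inversion lam z))"
    and "(LINT y:{y. r \<le> dist x0 y}|lborel. F y) \<le> (LINT y:({y. r \<le> dist x0 y} \<inter> ball 0 lam)|lborel. F y)
      + (LINT z:(ball 0 lam - {0})|lborel. inversion_jacobian lam z * F (sphere_inversion lam z))"
proof -
  define E where "E = {y::'a. r \<le> dist x0 y}"
  define B where "B = ball (0::'a) lam"
  define U where "U = {y::'a. lam < norm y}"
  define S where "S = {y::'a. norm y = lam}"
  have [measurable]: "E \<in> sets borel" "B \<in> sets borel" "U \<in> sets borel" "S \<in> sets borel"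
    unfolding E_def B_def U_def S_def by auto
  have [measurable]: "F \<in> borel_measurable borel"
    unfolding F_def by measurable
  have FE: "set_integrable lborel E F"
    unfolding E_def F_def by (rule set_integrable_frac_kernel_outside_ball[OF p r(1)]) (use v in simp_all)
  have far: "y \<in> E" if "lam \<le> norm y" for y
    using that r norm_triangle_ineq3[of y x0] by (simp add: E_def dist_norm norm_minus_commute)
  then have "U \<subseteq> E" "S \<subseteq> E"
    unfolding U_def S_def by auto
  then have FEB: "set_integrable lborel (E \<inter> B) F" and FU: "set_integrable lborel U F"
    and FS: "set_integrable lborel S F"
    by (auto intro: set_integrable_subset[OF FE])
  show "set_integrable lborel ({y. r \<le> dist x0 y} \<inter> ball 0 lam) F"
    using FEB unfolding E_def B_def .
  show "set_integrable lborel (ball 0 lam - {0}) (\<lambda>z. inversion_jacobian lam z * F (sphere_inversion lam z))"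
    using set_integrable_sphere_inversion[OF lam _ FU[unfolded U_def]] by simp
  have split: "indicator E y *\<^sub>R F y =
      indicator (E \<inter> B) y *\<^sub>R F y + indicator U y *\<^sub>R F y + indicator S y *\<^sub>R F y" for y
    using far[of y] by (cases "norm y < lam"; cases "lam < norm y") (auto simp: B_def U_def S_def indicator_def)
  have "(LINT y:E|lborel. F y) = (LINT y:(E \<inter> B)|lborel. F y) + (LINT y:U|lborel. F y) + (LINT y:S|lborel. F y)"
    using FEB FU FS unfolding set_lebesgue_integral_def set_integrable_def split
    by (simp add: Bochner_Integration.integral_add)
  also have "(LINT y:S|lborel. F y) \<le> 0"
  proof -
    have "0 \<le> integral\<^sup>L lborel (\<lambda>y. - (indicator S y *\<^sub>R F y))"
      using sphere \<open>v x0 < 0\<close>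
      by (intro integral_nonneg_AE AE_I2) (auto simp: S_def F_def indicator_def divide_nonpos_nonneg)
    then show ?thesis
      unfolding set_lebesgue_integral_def by simp
  qed
  also have "(LINT y:U|lborel. F y) = (LINT z:(B - {0})|lborel. inversion_jacobian lam z * F (sphere_inversion lam z))"
    unfolding U_def B_def by (rule set_integral_sphere_inversion[OF lam]) (use FU in \<open>simp_all add: U_def\<close>)
  finally show "(LINT y:{y. r \<le> dist x0 y}|lborel. F y) \<le> (LINT y:({y. r \<le> dist x0 y} \<inter> ball 0 lam)|lborel. F y)
      + (LINT z:(ball 0 lam - {0})|lborel. inversion_jacobian lam z * F (sphere_inversion lam z))"
    unfolding E_def B_def by simp
qed

lemma truncated_frac_integral_le_at_negative_min:
  fixes v :: "'a::euclidean_space \<Rightarrow> real" and x0 :: 'a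
  assumes lam: "lam > 0" and s: "0 < s" "2 * s < real DIM('a)"
    and [measurable]: "v \<in> borel_measurable borel"
    and v: "integrable lborel (\<lambda>x. v x / (1 + norm x powr (real DIM('a) + 2 * s)))"
    and odd: "\<And>x. x \<in> ball 0 lam - {0} \<Longrightarrow> v x = - kelvin s lam v x"
    and sphere: "\<And>y. norm y = lam \<Longrightarrow> v y = 0"
    and min: "v x0 < 0" "\<And>y. y \<in> ball 0 lam \<Longrightarrow> v x0 \<le> v y"
    and r: "0 < r" "r < lam - norm x0" "\<And>y. y \<in> ball x0 r \<Longrightarrow> v y \<le> 0"
  defines "p \<equiv> real DIM('a) + 2 * s"
  shows "(LINT y:{y. r \<le> dist x0 y}|lborel. (v x0 - v y) / norm (x0 - y) powr p)
     \<le> v x0 * (3 * (lam - norm x0)) powr (-p) * measure lborel (ball x0 (lam - norm x0))"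
proof -
  define F where "F = (\<lambda>y. (v x0 - v y) / norm (x0 - y) powr p)"
  define E where "E = {y::'a. r \<le> dist x0 y}"
  define B where "B = ball (0::'a) lam"
  define \<rho> where "\<rho> = lam - norm x0"
  define c where "c = v x0 * (3 * \<rho>) powr (-p)"
  have x0: "norm x0 < lam"
    using r by simp
  have "p > real DIM('a)"
    unfolding p_def using s by simp
  note reflected = truncated_frac_integral_le_reflected[OF lam this _ v[folded p_def] sphere min(1) r(1,2),
      folded F_def E_def B_def]
  have ball_sub: "ball x0 \<rho> \<subseteq> B"
    by (simp add: B_def \<rho>_def ball_subset_ball_iff)
  have "(LINT y:(E \<inter> B)|lborel. F y) + (LINT z:(B - {0})|lborel. inversion_jacobian lam z * F (sphere_inversion lam z))
      = integral\<^sup>L lborel (\<lambda>z. indicator (E \<inter> B) z *\<^sub>R F z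
          + indicator (B - {0}) z *\<^sub>R (inversion_jacobian lam z * F (sphere_inversion lam z)))"
    using reflected(1,2) unfolding set_lebesgue_integral_def set_integrable_def F_def
    by (simp add: Bochner_Integration.integral_add)
  also have "\<dots> \<le> integral\<^sup>L lborel (\<lambda>z. c * indicator (ball x0 \<rho>) z)"
  proof (rule integral_mono_AE)
    show "integrable lborel (\<lambda>z. c * indicator (ball x0 \<rho>) z)"
      using emeasure_lborel_ball_finite[of x0 \<rho>] by (intro integrable_mult_right integrable_real_indicator) auto
    show "AE z in lborel. indicator (E \<inter> B) z *\<^sub>R F z + indicator (B - {0}) z *\<^sub>R
        (inversion_jacobian lam z * F (sphere_inversion lam z)) \<le> c * indicator (ball x0 \<rho>) z"
      using AE_lborel_singleton[of 0]
    proof eventually_elim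
      fix z :: 'a
      assume "z \<noteq> 0"
      show "indicator (E \<inter> B) z *\<^sub>R F z + indicator (B - {0}) z *\<^sub>R
          (inversion_jacobian lam z * F (sphere_inversion lam z)) \<le> c * indicator (ball x0 \<rho>) z"
      proof (cases "z \<in> B")
        case True
        then have "indicator E z * F z + inversion_jacobian lam z * F (sphere_inversion lam z)
            \<le> c * indicator (ball x0 \<rho>) z"
          unfolding F_def c_def \<rho>_def E_def p_def
          using \<open>z \<noteq> 0\<close> r(3) by (intro frac_kernel_pair_le lam s x0 min odd) (auto simp: B_def)
        then show ?thesis
          using True \<open>z \<noteq> 0\<close> by (simp add: indicator_def)
      qed (use ball_sub in \<open>auto simp: indicator_def\<close>)
    qed
  qed (use reflected(1,2) in \<open>auto simp: set_integrable_def F_def\<close>)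
  also have "\<dots> = c * measure lborel (ball x0 \<rho>)"
    by simp
  finally show ?thesis
    using reflected(3) unfolding c_def \<rho>_def F_def E_def B_def by simp
qed

section \<open>The fractional Laplacian at a negative minimum\<close>

lemma C11_loc_continuous: "v \<in> C11_loc \<Longrightarrow> continuous_on UNIV v"
  unfolding C11_loc_def
  by (blast intro: continuous_at_imp_continuous_on has_derivative_continuous)

lemma C11_loc_quadratic_bound_at_local_min:
  fixes v :: "'a::euclidean_space \<Rightarrow> real"
  assumes "v \<in> C11_loc" and r: "r > 0" and min: "\<And>y. y \<in> ball x0 r \<Longrightarrow> v x0 \<le> v y"
  obtains L where "L \<ge> 0" "\<And>y. y \<in> ball x0 r \<Longrightarrow> v y - v x0 \<le> L * (norm (y - x0))^2"
proof -
  obtain D where D: "\<And>x. (v has_derivative (\<lambda>h. D x \<bullet> h)) (at x)"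
    and Lip: "\<And>K. compact K \<Longrightarrow> \<exists>L. \<forall>x\<in>K. \<forall>y\<in>K. norm (D x - D y) \<le> L * dist x y"
    using assms(1) unfolding C11_loc_def by blast
  have "(\<lambda>h. D x0 \<bullet> h) = (\<lambda>h. 0)"
    by (rule differential_zero_maxmin[of x0 "ball x0 r" v]) (use r D min in auto)
  then have D0: "D x0 = 0"
    by (metis inner_eq_zero_iff)
  obtain L0 where L0: "\<forall>x\<in>cball x0 r. \<forall>y\<in>cball x0 r. norm (D x - D y) \<le> L0 * dist x y"
    using Lip[of "cball x0 r"] by auto
  define L where "L = max L0 0"
  have L: "norm (D x - D x0) \<le> L * dist x x0" if "x \<in> cball x0 r" for x
    using L0 that r unfolding L_def by (smt (verit) centre_in_cball mult_right_mono zero_le_dist)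
  show thesis
  proof (rule that)
    show "0 \<le> L"
      unfolding L_def by simp
    fix y
    assume y: "y \<in> ball x0 r"
    define d where "d = norm (y - x0)"
    have "norm (v y - v x0) \<le> (L * d) * norm (y - x0)"
    proof (rule differentiable_bound[where S = "cball x0 d" and f' = "\<lambda>x h. D x \<bullet> h"])
      show "(v has_derivative (\<lambda>h. D x \<bullet> h)) (at x within cball x0 d)" for x
        by (rule has_derivative_at_withinI[OF D])
      fix x
      assume x: "x \<in> cball x0 d"
      have "onorm (\<lambda>h. D x \<bullet> h) \<le> norm (D x - D x0)"
        using onorm_inner_right[of "\<lambda>h::'a. h" "D x"] by (simp add: onorm_id D0)
      also have "\<dots> \<le> L * dist x x0"
        using x y by (intro L) (auto simp: d_def dist_norm norm_minus_commute)
      also have "\<dots> \<le> L * d"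
        using x unfolding L_def by (intro mult_left_mono) (auto simp: dist_commute)
      finally show "onorm (\<lambda>h. D x \<bullet> h) \<le> L * d" .
    qed (auto simp: d_def dist_norm norm_minus_commute)
    then show "v y - v x0 \<le> L * (norm (y - x0))^2"
      unfolding d_def by (simp add: power2_eq_square mult_ac)
  qed
qed

text \<open>Near \<open>x0\<close> the kernel is dominated by \<open>L |x0 - y|^(2 - p)\<close>, which is integrable since
  \<open>p - 2 < N\<close>; dominated convergence then yields the principal value.\<close>
lemma truncated_frac_integral_tendsto:
  fixes v :: "'a::euclidean_space \<Rightarrow> real" and x0 :: 'a
  assumes p: "real DIM('a) < p" "p - 2 < real DIM('a)"
    and [measurable]: "v \<in> borel_measurable borel"
    and v: "integrable lborel (\<lambda>x. v x / (1 + norm x powr p))"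
    and r: "r > 0" and L: "L \<ge> 0"
    and quadratic: "\<And>y. y \<in> ball x0 r \<Longrightarrow> 0 \<le> v y - v x0 \<and> v y - v x0 \<le> L * (norm (y - x0))^2"
  defines "F \<equiv> \<lambda>y. (v x0 - v y) / norm (x0 - y) powr p"
  shows "((\<lambda>\<epsilon>. LINT y:{y. \<epsilon> \<le> dist x0 y}|lborel. F y) \<longlongrightarrow> integral\<^sup>L lborel F) (at_right 0)"
  unfolding filterlim_at_right_to_top set_lebesgue_integral_def
proof (rule integral_dominated_convergence_at_top)
  let ?near = "\<lambda>y. L * (indicator {y. norm (x0 - y) < r} y * norm (x0 - y) powr (-(p - 2)))"
  let ?w = "\<lambda>y. \<bar>indicator {y. r \<le> dist x0 y} y *\<^sub>R F y\<bar> + ?near y"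
  have "set_integrable lborel {y. r \<le> dist x0 y} F"
    unfolding F_def by (rule set_integrable_frac_kernel_outside_ball[OF p(1) r _ v]) simp
  then show "integrable lborel ?w"
    unfolding set_integrable_def
    by (intro Bochner_Integration.integrable_add integrable_mult_right integrable_abs
        integrable_norm_diff_powr_inside_ball p r)
  show "AE y in lborel. ((\<lambda>t. indicator {y. inverse t \<le> dist x0 y} y *\<^sub>R F y) \<longlongrightarrow> F y) at_top"
    using AE_lborel_singleton[of x0]
  proof eventually_elim
    fix y :: 'a
    assume "y \<noteq> x0"
    then have "\<forall>\<^sub>F t in at_top. inverse t \<le> dist x0 y"
      by (intro eventually_at_top_linorderI[of "inverse (dist x0 y)"])
         (metis inverse_inverse_eq inverse_le_imp_le inverse_positive_iff_positive zero_less_dist_iff)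
    then have "\<forall>\<^sub>F t in at_top. indicator {y. inverse t \<le> dist x0 y} y *\<^sub>R F y = F y"
      by eventually_elim simp
    then show "((\<lambda>t. indicator {y. inverse t \<le> dist x0 y} y *\<^sub>R F y) \<longlongrightarrow> F y) at_top"
      by (rule tendsto_eventually)
  qed
  have "norm (F y) \<le> ?w y" for y
  proof (cases "r \<le> dist x0 y")
    case False
    show ?thesis
    proof (cases "y = x0")
      case False
      define d where "d = norm (x0 - y)"
      have d: "d > 0"
        unfolding d_def using False by simp
      have y: "y \<in> ball x0 r"
        using \<open>\<not> r \<le> dist x0 y\<close> by simp
      have "norm (F y) = (v y - v x0) / d powr p"
        unfolding F_def d_def using quadratic[OF y] by simp
      also have "\<dots> \<le> L * d powr 2 / d powr p"
        using quadratic[OF y] d unfolding d_def by (intro divide_right_mono) (auto simp: norm_minus_commute)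
      also have "\<dots> = L * d powr (-(p - 2))"
        by (simp add: powr_diff)
      finally show ?thesis
        using \<open>\<not> r \<le> dist x0 y\<close> by (simp add: d_def dist_norm)
    qed (use L in \<open>simp add: F_def\<close>)
  qed (use L in simp)
  then show "\<forall>\<^sub>F t in at_top. AE y in lborel. norm (indicator {y. inverse t \<le> dist x0 y} y *\<^sub>R F y) \<le> ?w y"
    using L by (intro always_eventually allI AE_I2) (auto simp: indicator_def)
qed (auto simp: F_def)

lemma frac_const_pos: "0 < s \<Longrightarrow> s < 1 \<Longrightarrow> frac_const N s > 0"
  unfolding frac_const_def
  by (intro divide_pos_pos mult_pos_pos Gamma_real_pos) (auto simp: add_pos_nonneg)

lemma kelvin_odd_vanishes_on_sphere:
  fixes v :: "'a::euclidean_space \<Rightarrow> real"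
  assumes cont: "continuous_on UNIV v" and lam: "lam > 0"
    and odd: "\<And>x. x \<in> ball 0 lam - {0} \<Longrightarrow> v x = - kelvin s lam v x"
    and y: "norm y = lam"
  shows "v y = 0"
proof -
  let ?h = "\<lambda>z. v z + kelvin s lam v z"
  have "y \<noteq> 0"
    using y lam by auto
  have "continuous_on (UNIV - {0}) (kelvin s lam v)"
    unfolding kelvin_def using lam by (intro continuous_intros continuous_on_compose2[OF cont]) auto
  then have "isCont ?h y"
    using cont \<open>y \<noteq> 0\<close> by (intro continuous_intros) (simp_all add: continuous_on_eq_continuous_at open_Diff)
  then have "(?h \<longlongrightarrow> ?h y) (at y within ball 0 lam - {0})"
    using continuous_at_imp_continuous_within by (auto simp: continuous_within)
  moreover have "\<forall>\<^sub>F z in at y within ball 0 lam - {0}. ?h z = 0"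
    unfolding eventually_at_filter using odd by (intro always_eventually) auto
  then have "(?h \<longlongrightarrow> 0) (at y within ball 0 lam - {0})"
    by (rule tendsto_eventually)
  moreover have "y islimpt ball 0 lam - {0}"
    using islimpt_insert[of y 0 "ball 0 lam - {0}"] lam y by (simp add: islimpt_ball insert_absorb)
  ultimately have "?h y = 0"
    by (intro tendsto_unique) (simp_all add: trivial_limit_within)
  moreover have "kelvin s lam v y = v y"
    unfolding kelvin_def using y lam by (simp add: power2_eq_square)
  ultimately show ?thesis
    by simp
qed

lemma negative_min_in_narrow_region:
  fixes v :: "'a::euclidean_space \<Rightarrow> real"
  assumes cont: "continuous_on UNIV v" and "0 \<le> \<delta>" "\<delta> < lam"
    and sphere: "\<And>y. norm y = lam \<Longrightarrow> v y = 0"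
    and narrow: "\<Omega> \<subseteq> {x. lam - \<delta> < norm x \<and> norm x < lam}"
    and nonneg: "\<And>x. x \<in> ball 0 lam - {0} - \<Omega> \<Longrightarrow> 0 \<le> v x"
    and "x1 \<in> \<Omega>" "v x1 < 0"
  obtains x0 where "x0 \<in> \<Omega>" "v x0 < 0" "\<And>y. y \<in> ball 0 lam \<Longrightarrow> v x0 \<le> v y"
proof -
  have "x1 \<in> ball 0 lam"
    using narrow \<open>x1 \<in> \<Omega>\<close> by auto
  then have "lam > 0"
    by (metis mem_ball_0 norm_ge_zero order_le_less_trans)
  obtain x0 where x0: "x0 \<in> cball 0 lam" and min: "\<And>y. y \<in> cball 0 lam \<Longrightarrow> v x0 \<le> v y"
    using continuous_attains_inf[of "cball 0 lam" v] continuous_on_subset[OF cont] \<open>lam > 0\<close> by auto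
  have neg: "v x0 < 0"
    using min[of x1] \<open>x1 \<in> ball 0 lam\<close> \<open>v x1 < 0\<close> by simp
  have "0 \<le> v 0"
  proof (rule tendsto_lowerbound)
    show "(v \<longlongrightarrow> v 0) (at (0::'a) within ball 0 (lam - \<delta>) - {0})"
      using cont continuous_at_imp_continuous_within
      by (auto simp: continuous_on_eq_continuous_at continuous_within)
    show "\<forall>\<^sub>F x in at (0::'a) within ball 0 (lam - \<delta>) - {0}. 0 \<le> v x"
      unfolding eventually_at_filter using narrow \<open>0 \<le> \<delta>\<close>
      by (intro always_eventually allI impI nonneg) auto
    have "(0::'a) islimpt ball 0 (lam - \<delta>)"
      using \<open>\<delta> < lam\<close> by (simp add: islimpt_ball)
    then have "(0::'a) islimpt ball 0 (lam - \<delta>) - {0}"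
      using islimpt_punctured by blast
    then show "at (0::'a) within ball 0 (lam - \<delta>) - {0} \<noteq> bot"
      by (simp add: trivial_limit_within)
  qed
  moreover have "norm x0 \<noteq> lam"
    using sphere neg by auto
  ultimately have "x0 \<in> ball 0 lam - {0}"
    using x0 neg by auto
  then have "x0 \<in> \<Omega>"
    using nonneg neg by force
  then show thesis
    using that neg min by auto
qed

lemma powr_measure_ball_scaling:
  fixes x :: "'a::euclidean_space"
  assumes \<rho>: "\<rho> > 0"
  shows "(3 * \<rho>) powr (-(real DIM('a) + 2 * s)) * measure lborel (ball x \<rho>)
    = 3 powr (-(real DIM('a) + 2 * s)) * measure lborel (ball (0::'a) 1) * \<rho> powr (-(2 * s))"
proof -
  have "measure lborel (ball x \<rho>) = \<rho> powr real DIM('a) * measure lborel (ball (0::'a) 1)"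
    using content_ball_conv_unit_ball[of \<rho> x] \<rho> by (simp add: powr_realpow)
  then show ?thesis
    using \<rho> by (simp add: powr_mult powr_add[symmetric] mult_ac)
qed

lemma continuous_negative_ball_inside:
  fixes v :: "'a::euclidean_space \<Rightarrow> real"
  assumes "continuous_on UNIV v" "v x0 < 0" "norm x0 < lam"
  obtains r where "0 < r" "r < lam - norm x0" "\<And>y. y \<in> ball x0 r \<Longrightarrow> v y < 0"
proof -
  obtain e where "e > 0" "ball x0 e \<subseteq> {y. v y < 0}"
    using open_Collect_less[OF assms(1) continuous_on_const, of 0] assms(2) by (auto elim: openE)
  then show thesis
    using assms(3) by (intro that[of "min e ((lam - norm x0) / 2)"]) (auto simp: min_less_iff_disj)
qed

lemma frac_lap_le_at_negative_min:
  fixes v :: "'a::euclidean_space \<Rightarrow> real" and x0 :: 'a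
  assumes s: "0 < s" "s < 1" "2 * s < real DIM('a)" and lam: "lam > 0"
    and v: "v \<in> C11_loc" "v \<in> L2s s"
    and odd: "\<And>x. x \<in> ball 0 lam - {0} \<Longrightarrow> v x = - kelvin s lam v x"
    and x0: "norm x0 < lam"
    and min: "v x0 < 0" "\<And>y. y \<in> ball 0 lam \<Longrightarrow> v x0 \<le> v y"
  shows "frac_lap s v x0 \<le> frac_const DIM('a) s * measure lborel (ball (0::'a) 1) *
    3 powr (-(real DIM('a) + 2 * s)) * v x0 * (lam - norm x0) powr (-(2 * s))"
proof -
  define p where "p = real DIM('a) + 2 * s"
  define \<rho> where "\<rho> = lam - norm x0"
  define I where "I = (\<lambda>\<epsilon>. LINT y:{y. \<epsilon> \<le> dist x0 y}|lborel. (v x0 - v y) / norm (x0 - y) powr p)"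
  have \<rho>: "\<rho> > 0"
    unfolding \<rho>_def using x0 by simp
  have cont: "continuous_on UNIV v"
    by (rule C11_loc_continuous[OF v(1)])
  then have [measurable]: "v \<in> borel_measurable borel"
    by (rule borel_measurable_continuous_onI)
  have integrable: "integrable lborel (\<lambda>x. v x / (1 + norm x powr p))"
    using v(2) unfolding L2s_def p_def by simp
  have sphere: "v y = 0" if "norm y = lam" for y
    by (rule kelvin_odd_vanishes_on_sphere[OF cont lam odd that])
  obtain r where r: "0 < r" "r < \<rho>" "\<And>y. y \<in> ball x0 r \<Longrightarrow> v y < 0"
    using continuous_negative_ball_inside[OF cont min(1)] x0 unfolding \<rho>_def by blast
  have inside: "ball x0 r \<subseteq> ball 0 lam"
    using r(2) by (simp add: ball_subset_ball_iff \<rho>_def)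
  obtain L where L: "L \<ge> 0" "\<And>y. y \<in> ball x0 r \<Longrightarrow> v y - v x0 \<le> L * (norm (y - x0))^2"
    using C11_loc_quadratic_bound_at_local_min[OF v(1) r(1)] min(2) inside by blast
  have lim: "(I \<longlongrightarrow> integral\<^sup>L lborel (\<lambda>y. (v x0 - v y) / norm (x0 - y) powr p)) (at_right 0)"
    unfolding I_def using s min(2) inside L
    by (intro truncated_frac_integral_tendsto[OF _ _ _ integrable r(1), of L]) (auto simp: p_def)
  have "integral\<^sup>L lborel (\<lambda>y. (v x0 - v y) / norm (x0 - y) powr p) \<le> v x0 * (3 * \<rho>) powr (-p) * measure lborel (ball x0 \<rho>)"
  proof (rule tendsto_upperbound[OF lim])
    show "\<forall>\<^sub>F \<epsilon> in at_right 0. I \<epsilon> \<le> v x0 * (3 * \<rho>) powr (-p) * measure lborel (ball x0 \<rho>)"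
    proof (rule eventually_at_rightI[OF _ r(1)])
      fix \<epsilon>
      assume "\<epsilon> \<in> {0<..<r}"
      then show "I \<epsilon> \<le> v x0 * (3 * \<rho>) powr (-p) * measure lborel (ball x0 \<rho>)"
        unfolding I_def p_def \<rho>_def using r
        by (intro truncated_frac_integral_le_at_negative_min lam s(1,3) integrable[unfolded p_def] odd
            sphere min less_imp_le) (auto simp: \<rho>_def)
    qed
  qed simp
  moreover have "frac_lap s v x0 = frac_const DIM('a) s * integral\<^sup>L lborel (\<lambda>y. (v x0 - v y) / norm (x0 - y) powr p)"
    unfolding frac_lap_def p_def[symmetric] I_def[symmetric] using tendsto_Lim[OF _ lim] by simp
  ultimately show ?thesis
    using frac_const_pos[OF s(1,2), of "DIM('a)"] powr_measure_ball_scaling[OF \<rho>, of s x0]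
    unfolding p_def \<rho>_def by (simp add: mult_ac)
qed

section \<open>The narrow region principle\<close>

lemma powr_le_max_endpoints:
  fixes a b t :: real
  assumes "0 < a" "a \<le> t" "t \<le> b"
  shows "t powr \<alpha> \<le> max (b powr \<alpha>) (a powr \<alpha>)"
proof (cases "\<alpha> \<ge> 0")
  case True
  then have "t powr \<alpha> \<le> b powr \<alpha>"
    using assms by (intro powr_mono2) auto
  then show ?thesis
    by simp
next
  case False
  then have "t powr \<alpha> \<le> a powr \<alpha>"
    using assms by (intro powr_mono2') auto
  then show ?thesis
    by simp
qed

lemma small_radius_powr_dominates:
  fixes K M s lam :: real
  assumes "K > 0" "M > 0" "s > 0" "lam > 0"
  obtains \<delta> where "0 < \<delta>" "\<delta> \<le> lam / 2" "\<And>\<rho>. 0 < \<rho> \<Longrightarrow> \<rho> < \<delta> \<Longrightarrow> M < K * \<rho> powr (-(2 * s))"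
proof
  define \<delta> where "\<delta> = min (lam / 2) ((K / M) powr (1 / (2 * s)))"
  show "0 < \<delta>" "\<delta> \<le> lam / 2"
    unfolding \<delta>_def using assms by auto
  fix \<rho> :: real
  assume "0 < \<rho>" "\<rho> < \<delta>"
  then have "\<rho> powr (2 * s) < ((K / M) powr (1 / (2 * s))) powr (2 * s)"
    unfolding \<delta>_def using assms by (intro powr_less_mono2) auto
  also have "\<dots> = K / M"
    using assms by (simp add: powr_powr)
  finally show "M < K * \<rho> powr (-(2 * s))"
    using assms \<open>0 < \<rho>\<close> by (simp add: powr_minus field_simps)
qed

lemma nonneg_in_narrow_region:
  fixes v :: "'a::euclidean_space \<Rightarrow> real"
  assumes s: "0 < s" "s < 1" "2 * s < real DIM('a)" and "C > 0" and lam: "lam > 0"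
    and \<delta>0: "0 < \<delta>0" "\<delta>0 \<le> lam / 2"
    and dominates: "\<And>\<rho>. 0 < \<rho> \<Longrightarrow> \<rho> < \<delta>0 \<Longrightarrow> C * max (lam powr \<alpha>) ((lam / 2) powr \<alpha>) <
      frac_const DIM('a) s * measure lborel (ball (0::'a) 1) * 3 powr (-(real DIM('a) + 2 * s)) *
      \<rho> powr (-(2 * s))"
    and v: "v \<in> L2s s" "v \<in> C11_loc"
    and odd: "\<And>x. x \<in> ball 0 lam - {0} \<Longrightarrow> v x = - kelvin s lam v x"
    and equation: "\<And>x. x \<in> \<Omega> \<Longrightarrow> frac_lap s v x - C * norm x powr \<alpha> * v x \<ge> 0"
    and nonneg: "\<And>x. x \<in> ball 0 lam - {0} - \<Omega> \<Longrightarrow> v x \<ge> 0"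
    and narrow: "\<Omega> \<subseteq> {x. lam - \<delta>0 < norm x \<and> norm x < lam}"
    and "x1 \<in> \<Omega>"
  shows "0 \<le> v x1"
proof (rule ccontr)
  assume "\<not> 0 \<le> v x1"
  then have "v x1 < 0"
    by simp
  define K where "K = frac_const DIM('a) s * measure lborel (ball (0::'a) 1) * 3 powr (-(real DIM('a) + 2 * s))"
  have cont: "continuous_on UNIV v"
    by (rule C11_loc_continuous[OF v(2)])
  have sphere: "v y = 0" if "norm y = lam" for y
    by (rule kelvin_odd_vanishes_on_sphere[OF cont lam odd that])
  obtain x0 where x0: "x0 \<in> \<Omega>" "v x0 < 0" "\<And>y. y \<in> ball 0 lam \<Longrightarrow> v x0 \<le> v y"
    by (rule negative_min_in_narrow_region[OF cont _ _ sphere narrow nonneg \<open>x1 \<in> \<Omega>\<close> \<open>v x1 < 0\<close>])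
       (use \<delta>0 lam in auto)
  have near: "lam - \<delta>0 < norm x0" "norm x0 < lam"
    using narrow x0(1) by auto
  have "C * norm x0 powr \<alpha> * v x0 \<le> frac_lap s v x0"
    using equation[OF x0(1)] by simp
  also have "\<dots> \<le> K * v x0 * (lam - norm x0) powr (-(2 * s))"
    unfolding K_def by (rule frac_lap_le_at_negative_min[OF s lam v(2,1) odd near(2) x0(2,3)])
  finally have "K * (lam - norm x0) powr (-(2 * s)) \<le> C * norm x0 powr \<alpha>"
    using x0(2) by (simp add: mult.commute mult.left_commute mult_le_cancel_left)
  moreover have "C * norm x0 powr \<alpha> \<le> C * max (lam powr \<alpha>) ((lam / 2) powr \<alpha>)"
    using \<open>C > 0\<close> near \<delta>0 lam powr_le_max_endpoints[of "lam / 2" "norm x0" lam \<alpha>]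
    by (intro mult_left_mono) auto
  ultimately show False
    using dominates[of "lam - norm x0"] near unfolding K_def by simp
qed

theorem lemma3p1:
  fixes s \<alpha> C lam :: real
  assumes "0 < s" "s < 1" "real DIM('a::euclidean_space) > 2 * s"
    and "\<alpha> > -2 * s" "C > 0" "lam > 0"
  shows "\<exists>\<delta>0>0. \<forall>(v::'a \<Rightarrow> real) \<Omega>.
     v \<in> L2s s \<and> v \<in> C11_loc \<and>
     (\<forall>x\<in>ball 0 lam - {0}. v x = - kelvin s lam v x) \<and>
     \<Omega> \<subseteq> ball 0 lam - {0} \<and>
     (\<forall>x\<in>\<Omega>. frac_lap s v x - C * norm x powr \<alpha> * v x \<ge> 0) \<and>
     (\<forall>x\<in>(ball 0 lam - {0}) - \<Omega>. v x \<ge> 0) \<and>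
     \<Omega> \<subseteq> {x. lam - \<delta>0 < norm x \<and> norm x < lam}
     \<longrightarrow> (\<forall>x\<in>\<Omega>. v x \<ge> 0)"
proof -
  \<comment> \<open>Only \<open>\<lambda>/2 < |x| < \<lambda>\<close> matters.\<close>
  note s = assms(1-3) and lam = assms(6)
  have "0 < frac_const DIM('a) s * measure lborel (ball (0::'a) 1) * 3 powr (-(real DIM('a) + 2 * s))"
    using frac_const_pos[OF s(1,2)] content_ball_pos[of 1 "0::'a"] by simp
  moreover have "0 < C * max (lam powr \<alpha>) ((lam / 2) powr \<alpha>)"
    using assms(5) lam by (simp add: max_def)
  ultimately obtain \<delta>0 where \<delta>0: "0 < \<delta>0" "\<delta>0 \<le> lam / 2"
    and dominates: "\<And>\<rho>. 0 < \<rho> \<Longrightarrow> \<rho> < \<delta>0 \<Longrightarrow> C * max (lam powr \<alpha>) ((lam / 2) powr \<alpha>) <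
      frac_const DIM('a) s * measure lborel (ball (0::'a) 1) * 3 powr (-(real DIM('a) + 2 * s)) *
      \<rho> powr (-(2 * s))"
    using small_radius_powr_dominates s(1) lam by blast
  show ?thesis
  proof (intro exI[of _ \<delta>0] conjI \<delta>0(1) allI impI ballI, elim conjE)
    fix v :: "'a \<Rightarrow> real" and \<Omega> x
    assume H: "v \<in> L2s s" "v \<in> C11_loc" "\<forall>x\<in>ball 0 lam - {0}. v x = - kelvin s lam v x"
      "\<forall>x\<in>\<Omega>. frac_lap s v x - C * norm x powr \<alpha> * v x \<ge> 0" "\<forall>x\<in>(ball 0 lam - {0}) - \<Omega>. v x \<ge> 0"
      "\<Omega> \<subseteq> {x. lam - \<delta>0 < norm x \<and> norm x < lam}" "x \<in> \<Omega>"
    show "0 \<le> v x"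
      by (rule nonneg_in_narrow_region[OF s assms(5) lam \<delta>0 dominates]) (use H in auto)
  qed
qed

end
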